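(* Let $P_{Y|X}$ be a BISO channel with output alphabet $\{0,\pm1,\dots,\pm l\}$ and transition probabilities $p_y=P_{Y|X}(y|0)=P_{Y|X}(-y|1)$. Then $$\eta_{KL}(P)=\sum_{y>0}\frac{(p_y-p_{-y})^2}{p_y+p_{-y}},$$ where summands with $p_y+p_{-y}=0$ are taken to be $0$.
   Context: A binary-input symmetric-output (BISO) channel is a channel $P_{Y|X}$ with input alphabet $\{0,1\}$ and finite output alphabet $\mathcal Y=\{0,\pm1,\dots,\pm l\}$ for some integer $l\ge 1$ (some transition probabilities may be zero), such that $P_{Y|X}(y|0)=P_{Y|X}(-y|1)=:p_y$ for all $y\in\mathcal Y$. For a channel $P=P_{Y|X}$ and an input distribution $P_X$, write $P\circ P_X$ for the induced output distribution. The KL contraction coefficient is $\eta_{KL}(P)=\sup_{P_X,Q_X}\frac{D(P\circ P_X\|P\circ Q_X)}{D(P_X\|Q_X)}$, the supremum over input distributions with $0<D(P_X\|Q_X)<\infty$, where $D$ is the Kullback–Leibler divergence. *)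

theory Defs
  imports "HOL-Analysis.Analysis"
begin

definition is_dist :: "'a set \<Rightarrow> ('a \<Rightarrow> real) \<Rightarrow> bool" where
  "is_dist A P \<longleftrightarrow> (\<forall>x\<in>A. 0 \<le> P x) \<and> sum P A = 1"

text \<open>Kullback--Leibler divergence of finite distributions (natural log; with the
conventions 0 log(0/q) = 0 and p log(p/0) = +infinity for p > 0).\<close>
definition KL :: "'a set \<Rightarrow> ('a \<Rightarrow> real) \<Rightarrow> ('a \<Rightarrow> real) \<Rightarrow> ereal" where
  "KL A P Q = (if \<exists>x\<in>A. P x > 0 \<and> Q x = 0 then \<infinity>
     else ereal (\<Sum>x\<in>{x\<in>A. P x > 0}. P x * ln (P x / Q x)))"

definition out_alph :: "nat \<Rightarrow> int set" where
  "out_alph l = {- int l .. int l}"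

definition in_alph :: "nat set" where
  "in_alph = {0, 1}"

definition biso_W :: "(int \<Rightarrow> real) \<Rightarrow> nat \<Rightarrow> int \<Rightarrow> real" where
  "biso_W p x y = (if x = 0 then p y else p (- y))"

definition is_biso :: "nat \<Rightarrow> (int \<Rightarrow> real) \<Rightarrow> bool" where
  "is_biso l p \<longleftrightarrow> l \<ge> 1 \<and> is_dist (out_alph l) p"

definition out_dist :: "(nat \<Rightarrow> int \<Rightarrow> real) \<Rightarrow> (nat \<Rightarrow> real) \<Rightarrow> int \<Rightarrow> real" where
  "out_dist W PX y = (\<Sum>x\<in>in_alph. PX x * W x y)"

definition eta_KL :: "nat \<Rightarrow> (nat \<Rightarrow> int \<Rightarrow> real) \<Rightarrow> ereal" where
  "eta_KL l W = Sup {KL (out_alph l) (out_dist W PX) (out_dist W QX) / KL in_alph PX QX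
      | PX QX. is_dist in_alph PX \<and> is_dist in_alph QX
              \<and> 0 < KL in_alph PX QX \<and> KL in_alph PX QX < \<infinity>}"

end

theory Submission
  imports Defs "HOL-Real_Asymp.Real_Asymp"
begin

(* On each output pair {y, -y} a BISO channel acts as a binary symmetric channel scaled by the mass
   p y + p(-y), and there the output divergence is at most (p y - p(-y))^2 / (p y + p(-y)) times the
   input divergence D(x||r): the difference is convex in the input x and stationary at x = r.
   Summing over the pairs bounds the coefficient from above. Conversely, perturb the uniform input
   by e: to second order in e both divergences are half a chi-square divergence, and the ratio of
   these chi-squares is exactly the sum. *)

definition kl_term :: "real \<Rightarrow> real \<Rightarrow> real" where
  "kl_term u v = u * ln (u / v)"

lemma kl_term_same [simp]: "kl_term v v = 0"
  unfolding kl_term_def by (cases "v = 0") auto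

lemma continuous_on_x_ln_x: "continuous_on {0..} (\<lambda>t::real. t * ln t)"
  unfolding continuous_on_eq_continuous_within
proof
  fix x :: real assume "x \<in> {0..}"
  show "continuous (at x within {0..}) (\<lambda>t. t * ln t)"
  proof (cases "x = 0")
    case True
    have "((\<lambda>t::real. t * ln t) \<longlongrightarrow> 0) (at_right 0)" by real_asymp
    with True show ?thesis by (simp add: continuous_within at_within_Ici_at_right)
  next
    case False
    with \<open>x \<in> {0..}\<close> show ?thesis by (auto intro!: continuous_intros)
  qed
qed

lemma continuous_on_kl_term:
  assumes "0 < v" "continuous_on S f" "\<And>x. x \<in> S \<Longrightarrow> 0 \<le> f x"
  shows "continuous_on S (\<lambda>x. kl_term (f x) v)"
proof -
  have "kl_term (f x) v = f x * ln (f x) - f x * ln v" if "x \<in> S" for x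
    using assms(1) assms(3)[OF that] by (cases "f x = 0") (auto simp: kl_term_def ln_div algebra_simps)
  moreover have "continuous_on S (\<lambda>x. f x * ln (f x))"
    using continuous_on_compose2[OF continuous_on_x_ln_x assms(2)] assms(3) by auto
  then have "continuous_on S (\<lambda>x. f x * ln (f x) - f x * ln v)"
    using assms(2) by (intro continuous_on_diff continuous_on_mult_right)
  ultimately show ?thesis by (simp cong: continuous_on_cong)
qed

lemma has_real_derivative_kl_term:
  assumes "(f has_real_derivative f') (at z)" "0 < f z" "0 < v"
  shows "((\<lambda>z. kl_term (f z) v) has_real_derivative f' * (ln (f z / v) + 1)) (at z)"
  unfolding kl_term_def using assms by (auto intro!: derivative_eq_intros simp: field_simps)

lemma kl_term_second_order:
  assumes "0 < a"
  shows "((\<lambda>e. (kl_term (a + e * b) a - e * b) / e^2) \<longlongrightarrow> b^2 / (2 * a)) (at 0)"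
  using assms unfolding kl_term_def by (real_asymp simp: field_simps power2_eq_square)

lemma convex_stationary_point_is_min:
  fixes F :: "real \<Rightarrow> real"
  assumes "continuous_on {a..b} F"
    and "\<And>z. z \<in> {a<..<b} \<Longrightarrow> (F has_real_derivative F' z) (at z)"
    and "\<And>z. z \<in> {a<..<b} \<Longrightarrow> (F' has_real_derivative F'' z) (at z)"
    and "\<And>z. z \<in> {a<..<b} \<Longrightarrow> 0 \<le> F'' z"
    and "r \<in> {a<..<b}" "F' r = 0" "x \<in> {a..b}"
  shows "F r \<le> F x"
proof -
  have "convex_on {a<..<b} F"
    using assms(2-4) by (intro f''_ge0_imp_convex) auto
  then have "F r \<le> F y" if "y \<in> {a<..<b}" for y
    using convex_on_imp_above_tangent[of "{a<..<b}" F r y "F' r"]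
      has_field_derivative_at_within[OF assms(2)[OF assms(5)]] assms(5,6) that
    by auto
  moreover have "a < b" using assms(5) by simp
  ultimately show ?thesis
    using continuous_ge_on_closure[of "{a<..<b}" F x "F r"] assms(1,7) by auto
qed

lemma convex_combination_pos:
  fixes a b z :: real
  assumes "0 \<le> a" "0 \<le> b" "0 < a + b" "0 < z" "z < 1"
  shows "0 < z * a + (1 - z) * b"
  using assms by (cases "a = 0") (auto intro: add_nonneg_pos add_pos_nonneg)

text \<open>Both sides are Fisher informations in the input parameter z, of the output pair and (scaled)
  of the input; this is the second-derivative inequality behind the convexity in the next lemma.\<close>

lemma fisher_information_binary_symmetric_le:
  fixes a b z :: real
  assumes "0 \<le> a" "0 \<le> b" "0 < a + b" "0 < z" "z < 1"
  shows "(a-b)^2 * (1 / (z*a + (1-z)*b) + 1 / (z*b + (1-z)*a)) \<le> (a-b)^2 / (a+b) * (1/z + 1/(1-z))"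
proof -
  define A B where "A = z*a + (1-z)*b" and "B = z*b + (1-z)*a"
  have "0 < A" "0 < B"
    using convex_combination_pos[of a b z] convex_combination_pos[of b a z] assms
    by (auto simp: A_def B_def add.commute)
  have "A * B - (a+b)^2 * (z*(1-z)) = a*b*(2*z-1)^2"
    by (simp add: A_def B_def algebra_simps power2_eq_square)
  then have "(a+b)^2 * (z*(1-z)) \<le> A * B"
    using assms(1,2) by (smt (verit) mult_nonneg_nonneg zero_le_power2)
  then have "(a+b) / (A * B) \<le> 1 / ((a+b) * (z*(1-z)))"
    using assms \<open>0 < A\<close> \<open>0 < B\<close> by (simp add: divide_simps power2_eq_square mult.assoc)
  then have "(a-b)^2 * ((a+b) / (A * B)) \<le> (a-b)^2 * (1 / ((a+b) * (z*(1-z))))"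
    by (rule mult_left_mono) simp
  moreover have "1/A + 1/B = (a+b) / (A * B)"
    using \<open>0 < A\<close> \<open>0 < B\<close> by (simp add: field_simps A_def B_def)
  moreover have "(a-b)^2 / (a+b) * (1/z + 1/(1-z)) = (a-b)^2 * (1 / ((a+b) * (z*(1-z))))"
    using assms by (simp add: field_simps)
  ultimately show ?thesis by (simp add: A_def B_def)
qed

lemma kl_contraction_binary_symmetric:
  fixes a b r x :: real
  assumes ab: "0 \<le> a" "0 \<le> b" and r: "0 < r" "r < 1" and x: "0 \<le> x" "x \<le> 1"
  shows "kl_term (x*a + (1-x)*b) (r*a + (1-r)*b) + kl_term (x*b + (1-x)*a) (r*b + (1-r)*a)
         \<le> (a-b)^2 / (a+b) * (kl_term x r + kl_term (1-x) (1-r))"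
proof (cases "a + b = 0")
  case True
  with ab have "a = 0" "b = 0" by auto
  then show ?thesis by simp
next
  case False
  with ab have s: "0 < a + b" by simp
  define A B where "A z = z*a + (1-z)*b" and "B z = z*b + (1-z)*a" for z
  define c where "c = (a-b)^2 / (a+b)"
  have A_pos: "0 < A z" and B_pos: "0 < B z" if "z \<in> {0<..<1}" for z
    using convex_combination_pos[of a b z] convex_combination_pos[of b a z] ab s that
    by (auto simp: A_def B_def add.commute)
  define F where
    "F z = c * (kl_term z r + kl_term (1-z) (1-r)) - kl_term (A z) (A r) - kl_term (B z) (B r)" for z
  define F' where
    "F' z = c * (ln z - ln (1-z) - ln r + ln (1-r)) - (a-b) * (ln (A z) - ln (B z) - ln (A r) + ln (B r))"
    for z
  define F'' where "F'' z = c * (1/z + 1/(1-z)) - (a-b)^2 * (1 / A z + 1 / B z)" for z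
  have "F r \<le> F x"
  proof (rule convex_stationary_point_is_min[of 0 1 F F' F''])
    show "continuous_on {0..1} F"
      using ab r A_pos B_pos unfolding F_def A_def B_def
      by (intro continuous_intros continuous_on_kl_term) auto
  next
    fix z :: real assume z: "z \<in> {0<..<1}"
    have dA: "(A has_real_derivative a - b) (at z)" and dB: "(B has_real_derivative b - a) (at z)"
      unfolding A_def B_def by (auto intro!: derivative_eq_intros simp: algebra_simps)
    show "(F has_real_derivative F' z) (at z)"
      unfolding F_def F'_def using z r A_pos[OF z] B_pos[OF z] A_pos[of r] B_pos[of r]
      by (auto intro!: derivative_eq_intros has_real_derivative_kl_term dA dB simp: ln_div algebra_simps)
    show "(F' has_real_derivative F'' z) (at z)"
      unfolding F'_def F''_def using z A_pos[OF z] B_pos[OF z]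
      by (auto intro!: derivative_eq_intros dA dB simp: divide_simps power2_eq_square algebra_simps)
    show "0 \<le> F'' z"
      using fisher_information_binary_symmetric_le[OF ab s, of z] z by (simp add: F''_def c_def A_def B_def)
  qed (use r x A_pos B_pos in \<open>auto simp: F'_def\<close>)
  then show ?thesis by (simp add: F_def A_def B_def c_def)
qed

lemma KL_eq_sum_kl_term:
  assumes "finite A" "\<And>x. x \<in> A \<Longrightarrow> 0 \<le> P x" "\<And>x. x \<in> A \<Longrightarrow> 0 < P x \<Longrightarrow> 0 < Q x"
  shows "KL A P Q = ereal (\<Sum>x\<in>A. kl_term (P x) (Q x))"
proof -
  have "(\<Sum>x\<in>{x\<in>A. 0 < P x}. P x * ln (P x / Q x)) = (\<Sum>x\<in>A. kl_term (P x) (Q x))"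
    unfolding kl_term_def using assms(1,2) by (intro sum.mono_neutral_left) force+
  then show ?thesis using assms(3) unfolding KL_def by force
qed

lemma KL_eq_0: "(\<And>x. x \<in> A \<Longrightarrow> P x = Q x) \<Longrightarrow> KL A P Q = 0"
  unfolding KL_def by (auto simp: zero_ereal_def intro!: sum.neutral)

lemma tendsto_sum_kl_term_perturbation:
  assumes "finite A" "\<And>y. y \<in> A \<Longrightarrow> 0 \<le> a y" "\<And>y. y \<in> A \<Longrightarrow> a y = 0 \<Longrightarrow> b y = 0"
    and "(\<Sum>y\<in>A. b y) = 0"
  shows "((\<lambda>e. (\<Sum>y\<in>A. kl_term (a y + e * b y) (a y)) / e^2) \<longlongrightarrow> (\<Sum>y\<in>A. (b y)^2 / a y) / 2) (at 0)"
proof -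
  have "((\<lambda>e. \<Sum>y\<in>A. (kl_term (a y + e * b y) (a y) - e * b y) / e^2)
          \<longlongrightarrow> (\<Sum>y\<in>A. (b y)^2 / (2 * a y))) (at 0)"
  proof (rule tendsto_sum)
    fix y assume "y \<in> A"
    show "((\<lambda>e. (kl_term (a y + e * b y) (a y) - e * b y) / e^2) \<longlongrightarrow> (b y)^2 / (2 * a y)) (at 0)"
    proof (cases "a y = 0")
      case True
      with assms(3) \<open>y \<in> A\<close> show ?thesis by simp
    next
      case False
      with assms(2)[OF \<open>y \<in> A\<close>] show ?thesis by (intro kl_term_second_order) linarith
    qed
  qed
  moreover have "(\<Sum>y\<in>A. (kl_term (a y + e * b y) (a y) - e * b y) / e^2)
      = (\<Sum>y\<in>A. kl_term (a y + e * b y) (a y)) / e^2" for e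
    using assms(4) by (simp add: sum_divide_distrib[symmetric] sum_subtractf sum_distrib_left[symmetric])
  moreover have "(\<Sum>y\<in>A. (b y)^2 / (2 * a y)) = (\<Sum>y\<in>A. (b y)^2 / a y) / 2"
    by (simp add: sum_divide_distrib mult.commute)
  ultimately show ?thesis by simp
qed

lemma sum_in_alph: "sum f in_alph = f 0 + f 1"
  by (simp add: in_alph_def)

lemma mem_in_alph: "x \<in> in_alph \<longleftrightarrow> x = 0 \<or> x = 1"
  by (simp add: in_alph_def)

lemma is_dist_in_alph: "is_dist in_alph P \<longleftrightarrow> 0 \<le> P 0 \<and> P 0 \<le> 1 \<and> P 1 = 1 - P 0"
  by (auto simp: is_dist_def sum_in_alph in_alph_def)

lemma KL_in_alph_pos:
  assumes "is_dist in_alph PX" "is_dist in_alph QX" "0 < KL in_alph PX QX" "KL in_alph PX QX < \<infinity>"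
  shows "0 < QX 0" "QX 0 < 1"
proof -
  have QX_pos: "0 < QX x" if "x \<in> in_alph" for x
  proof (rule ccontr)
    assume "\<not> 0 < QX x"
    with assms(2) that have "QX x = 0" by (auto simp: is_dist_def)
    have "PX x = 0"
    proof (rule ccontr)
      assume "PX x \<noteq> 0"
      with assms(1) that have "0 < PX x" by (auto simp: is_dist_def order_less_le)
      with \<open>QX x = 0\<close> that have "KL in_alph PX QX = \<infinity>" by (auto simp: KL_def)
      with assms(4) show False by simp
    qed
    with \<open>QX x = 0\<close> assms(1,2) that have "KL in_alph PX QX = 0"
      unfolding is_dist_in_alph by (intro KL_eq_0) (auto simp: mem_in_alph)
    with assms(3) show False by simp
  qed
  from QX_pos[of 0] QX_pos[of 1] assms(2) show "0 < QX 0" "QX 0 < 1"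
    by (simp_all add: mem_in_alph is_dist_in_alph)
qed

lemma KL_in_alph_eq:
  assumes "is_dist in_alph PX" "is_dist in_alph QX" "0 < QX 0" "QX 0 < 1"
  shows "KL in_alph PX QX = ereal (kl_term (PX 0) (QX 0) + kl_term (1 - PX 0) (1 - QX 0))"
  using assms unfolding is_dist_in_alph
  by (subst KL_eq_sum_kl_term) (auto simp: sum_in_alph mem_in_alph in_alph_def)

lemma finite_out_alph [simp]: "finite (out_alph l)"
  by (simp add: out_alph_def)

lemma uminus_in_out_alph [simp]: "- y \<in> out_alph l \<longleftrightarrow> y \<in> out_alph l"
  by (auto simp: out_alph_def)

lemma is_biso_nonneg: "is_biso l p \<Longrightarrow> y \<in> out_alph l \<Longrightarrow> 0 \<le> p y"
  by (simp add: is_biso_def is_dist_def)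

lemma sum_symmetric_interval:
  "(\<Sum>y\<in>{-int n..int n}. g y) = g 0 + (\<Sum>y\<in>{1..int n}. g y + g (- y))"
proof (induction n)
  case (Suc n)
  have "{-int (Suc n)..int (Suc n)} = insert (int n + 1) (insert (- (int n + 1)) {-int n..int n})"
    and "{1..int (Suc n)} = insert (int n + 1) {1..int n}"
    by auto
  with Suc show ?case by (simp add: algebra_simps)
qed simp

lemma out_dist_biso_W: "out_dist (biso_W p) PX y = PX 0 * p y + PX 1 * p (- y)"
  by (simp add: out_dist_def sum_in_alph biso_W_def)

lemma KL_out_dist_biso_W:
  assumes "is_biso l p" "is_dist in_alph PX" "is_dist in_alph QX" "0 < QX 0" "QX 0 < 1"
  shows "KL (out_alph l) (out_dist (biso_W p) PX) (out_dist (biso_W p) QX)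
    = ereal (\<Sum>y\<in>out_alph l. kl_term (out_dist (biso_W p) PX y) (out_dist (biso_W p) QX y))"
proof (rule KL_eq_sum_kl_term)
  fix y assume y: "y \<in> out_alph l"
  then have p: "0 \<le> p y" "0 \<le> p (- y)"
    using is_biso_nonneg[OF assms(1)] by auto
  with assms(2) show "0 \<le> out_dist (biso_W p) PX y"
    by (simp add: out_dist_biso_W is_dist_in_alph)
  assume "0 < out_dist (biso_W p) PX y"
  with p have "0 < p y + p (- y)"
    by (cases "p y = 0 \<and> p (- y) = 0") (auto simp: out_dist_biso_W)
  with p assms(3-5) show "0 < out_dist (biso_W p) QX y"
    using convex_combination_pos[OF p] by (simp add: out_dist_biso_W is_dist_in_alph)
qed simp

lemma KL_ratio_le_eta_KL:
  assumes "is_dist in_alph PX" "is_dist in_alph QX" "0 < KL in_alph PX QX" "KL in_alph PX QX < \<infinity>"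
  shows "KL (out_alph l) (out_dist W PX) (out_dist W QX) / KL in_alph PX QX \<le> eta_KL l W"
  unfolding eta_KL_def using assms by (intro Sup_upper) blast

lemma eta_KL_le:
  assumes "\<And>PX QX. \<lbrakk>is_dist in_alph PX; is_dist in_alph QX; 0 < KL in_alph PX QX; KL in_alph PX QX < \<infinity>\<rbrakk>
    \<Longrightarrow> KL (out_alph l) (out_dist W PX) (out_dist W QX) / KL in_alph PX QX \<le> c"
  shows "eta_KL l W \<le> c"
  unfolding eta_KL_def using assms by (auto intro!: Sup_least)

lemma biso_KL_ratio_le:
  assumes biso: "is_biso l p" and PX: "is_dist in_alph PX" and QX: "is_dist in_alph QX"
    and pos: "0 < KL in_alph PX QX" and fin: "KL in_alph PX QX < \<infinity>"
  shows "KL (out_alph l) (out_dist (biso_W p) PX) (out_dist (biso_W p) QX) / KL in_alph PX QX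
         \<le> ereal (\<Sum>y\<in>{1..int l}. (p y - p (- y))^2 / (p y + p (- y)))"
proof -
  define x r where "x = PX 0" and "r = QX 0"
  have x: "0 \<le> x" "x \<le> 1" using PX by (simp_all add: x_def is_dist_in_alph)
  have r: "0 < r" "r < 1" using KL_in_alph_pos[OF PX QX pos fin] by (simp_all add: r_def)
  define D where "D = kl_term x r + kl_term (1-x) (1-r)"
  have KL_in: "KL in_alph PX QX = ereal D"
    using KL_in_alph_eq[OF PX QX r[unfolded r_def]] by (simp add: D_def x_def r_def)
  with pos have "0 < D" by simp
  define PY QY where "PY = out_dist (biso_W p) PX" and "QY = out_dist (biso_W p) QX"
  have PY_QY: "PY y = x * p y + (1-x) * p (- y)" "QY y = r * p y + (1-r) * p (- y)" for y
    using PX QX by (simp_all add: PY_def QY_def x_def r_def out_dist_biso_W is_dist_in_alph)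
  define D' where "D' = (\<Sum>y\<in>out_alph l. kl_term (PY y) (QY y))"
  have KL_out: "KL (out_alph l) PY QY = ereal D'"
    using KL_out_dist_biso_W[OF biso PX QX r[unfolded r_def]] by (simp add: D'_def PY_def QY_def)
  have "D' = (\<Sum>y\<in>{1..int l}. kl_term (PY y) (QY y) + kl_term (PY (- y)) (QY (- y)))"
    unfolding D'_def out_alph_def sum_symmetric_interval by (simp add: PY_QY algebra_simps)
  also have "\<dots> \<le> (\<Sum>y\<in>{1..int l}. (p y - p (- y))^2 / (p y + p (- y)) * D)"
  proof (rule sum_mono)
    fix y assume "y \<in> {1..int l}"
    then have "y \<in> out_alph l" by (simp add: out_alph_def)
    then have "0 \<le> p y" "0 \<le> p (- y)" using is_biso_nonneg[OF biso] by auto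
    from kl_contraction_binary_symmetric[OF this r x]
    show "kl_term (PY y) (QY y) + kl_term (PY (- y)) (QY (- y)) \<le> (p y - p (- y))^2 / (p y + p (- y)) * D"
      by (simp add: PY_QY D_def algebra_simps)
  qed
  finally have "D' / D \<le> (\<Sum>y\<in>{1..int l}. (p y - p (- y))^2 / (p y + p (- y)))"
    using \<open>0 < D\<close> by (simp add: pos_divide_le_eq sum_distrib_right)
  with \<open>0 < D\<close> show ?thesis by (simp add: KL_in KL_out flip: PY_def QY_def)
qed

definition perturbed_uniform :: "real \<Rightarrow> nat \<Rightarrow> real" where
  "perturbed_uniform e x = 1/2 + e * (if x = 0 then 1 else -1)"

lemma is_dist_perturbed_uniform: "\<bar>e\<bar> \<le> 1/2 \<Longrightarrow> is_dist in_alph (perturbed_uniform e)"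
  by (auto simp: is_dist_in_alph perturbed_uniform_def)

lemma tendsto_kl_term_half:
  "((\<lambda>e. (kl_term (1/2 + e) (1/2) + kl_term (1/2 - e) (1/2)) / e^2) \<longlongrightarrow> 2) (at 0)"
  using tendsto_add[OF kl_term_second_order[of "1/2" 1] kl_term_second_order[of "1/2" "-1"]]
  by (simp add: add_divide_distrib[symmetric])

lemma tendsto_KL_out_perturbed_uniform:
  assumes "is_biso l p"
  defines "Y \<equiv> \<lambda>e. out_dist (biso_W p) (perturbed_uniform e)"
  shows "((\<lambda>e. (\<Sum>y\<in>out_alph l. kl_term (Y e y) (Y 0 y)) / e^2)
          \<longlongrightarrow> 2 * (\<Sum>y\<in>{1..int l}. (p y - p (- y))^2 / (p y + p (- y)))) (at 0)"
proof -
  define m d where "m y = (p y + p (- y)) / 2" and "d y = p y - p (- y)" for y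
  have Y: "Y e y = m y + e * d y" for e y
    by (simp add: Y_def out_dist_biso_W perturbed_uniform_def m_def d_def field_simps)
  have "0 \<le> m y" "m y = 0 \<Longrightarrow> d y = 0" if "y \<in> out_alph l" for y
    using is_biso_nonneg[OF assms(1), of y] is_biso_nonneg[OF assms(1), of "- y"] that
    by (auto simp: m_def d_def)
  moreover have "(\<Sum>y\<in>out_alph l. d y) = 0"
    by (simp add: out_alph_def sum_symmetric_interval d_def)
  ultimately have "((\<lambda>e. (\<Sum>y\<in>out_alph l. kl_term (Y e y) (Y 0 y)) / e^2)
      \<longlongrightarrow> (\<Sum>y\<in>out_alph l. (d y)^2 / m y) / 2) (at 0)"
    unfolding Y mult_zero_left add_0_right by (intro tendsto_sum_kl_term_perturbation) auto
  moreover have "(\<Sum>y\<in>out_alph l. (d y)^2 / m y) = 4 * (\<Sum>y\<in>{1..int l}. (p y - p (- y))^2 / (p y + p (- y)))"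
    by (simp add: out_alph_def sum_symmetric_interval m_def d_def sum_distrib_left power2_commute add.commute)
  ultimately show ?thesis by simp
qed

lemma KL_in_perturbed_uniform:
  "\<bar>e\<bar> \<le> 1/2 \<Longrightarrow>
    KL in_alph (perturbed_uniform e) (perturbed_uniform 0) = ereal (kl_term (1/2 + e) (1/2) + kl_term (1/2 - e) (1/2))"
  using KL_in_alph_eq[OF is_dist_perturbed_uniform is_dist_perturbed_uniform[of 0]]
  by (simp add: perturbed_uniform_def[abs_def])

lemma eventually_kl_term_half_pos:
  "\<forall>\<^sub>F e in at 0. \<bar>e\<bar> \<le> 1/2 \<and> 0 < kl_term (1/2 + e) (1/2) + kl_term (1/2 - e) (1/2)"
proof -
  have "\<forall>\<^sub>F e in at 0. 0 < (kl_term (1/2 + e) (1/2) + kl_term (1/2 - e) (1/2)) / e^2"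
    using order_tendstoD(1)[OF tendsto_kl_term_half] by simp
  moreover have "\<forall>\<^sub>F e in at (0::real). \<bar>e\<bar> \<le> 1/2"
    unfolding eventually_at by (auto intro!: exI[of _ "1/2"])
  ultimately show ?thesis
    by eventually_elim (auto simp: zero_less_divide_iff)
qed

lemma biso_KL_ratio_perturbed_uniform:
  assumes biso: "is_biso l p"
  defines "U \<equiv> perturbed_uniform"
  shows "\<forall>\<^sub>F e in at 0. is_dist in_alph (U e) \<and> 0 < KL in_alph (U e) (U 0) \<and> KL in_alph (U e) (U 0) < \<infinity>"
    and "((\<lambda>e. KL (out_alph l) (out_dist (biso_W p) (U e)) (out_dist (biso_W p) (U 0)) / KL in_alph (U e) (U 0))
          \<longlongrightarrow> ereal (\<Sum>y\<in>{1..int l}. (p y - p (- y))^2 / (p y + p (- y)))) (at 0)"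
proof -
  define S where "S = (\<Sum>y\<in>{1..int l}. (p y - p (- y))^2 / (p y + p (- y)))"
  define D D' where "D e = kl_term (1/2 + e) (1/2) + kl_term (1/2 - e) (1/2)"
    and "D' e = (\<Sum>y\<in>out_alph l. kl_term (out_dist (biso_W p) (U e) y) (out_dist (biso_W p) (U 0) y))"
    for e
  have U: "is_dist in_alph (U e)" if "\<bar>e\<bar> \<le> 1/2" for e
    using that is_dist_perturbed_uniform by (simp add: U_def)
  have "0 < U 0 0" "U 0 0 < 1"
    by (simp_all add: U_def perturbed_uniform_def)
  with U[of 0] have KL: "KL in_alph (U e) (U 0) = ereal (D e)"
    "KL (out_alph l) (out_dist (biso_W p) (U e)) (out_dist (biso_W p) (U 0)) = ereal (D' e)"
    if "\<bar>e\<bar> \<le> 1/2" for e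
    using KL_in_perturbed_uniform[OF that] KL_out_dist_biso_W[OF biso U[OF that]]
    by (simp_all add: D_def D'_def U_def)
  from eventually_kl_term_half_pos
  show "\<forall>\<^sub>F e in at 0. is_dist in_alph (U e) \<and> 0 < KL in_alph (U e) (U 0) \<and> KL in_alph (U e) (U 0) < \<infinity>"
    by eventually_elim (simp add: KL U D_def)
  have "((\<lambda>e. (D' e / e^2) / (D e / e^2)) \<longlongrightarrow> 2 * S / 2) (at 0)"
    using tendsto_KL_out_perturbed_uniform[OF biso] tendsto_kl_term_half
    by (intro tendsto_divide) (simp_all add: D_def D'_def U_def S_def)
  then have "((\<lambda>e. ereal (D' e / D e)) \<longlongrightarrow> ereal S) (at 0)"
    by (intro tendsto_ereal) (auto elim!: Lim_transform_eventually simp: eventually_at_filter)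
  moreover from eventually_kl_term_half_pos have "\<forall>\<^sub>F e in at 0. ereal (D' e / D e)
      = KL (out_alph l) (out_dist (biso_W p) (U e)) (out_dist (biso_W p) (U 0)) / KL in_alph (U e) (U 0)"
    by eventually_elim (simp add: KL D_def)
  ultimately show "((\<lambda>e. KL (out_alph l) (out_dist (biso_W p) (U e)) (out_dist (biso_W p) (U 0))
      / KL in_alph (U e) (U 0)) \<longlongrightarrow> ereal S) (at 0)"
    by (rule Lim_transform_eventually)
qed

theorem mainTheorem1:
  fixes l :: nat and p :: "int \<Rightarrow> real"
  assumes "is_biso l p"
  shows "eta_KL l (biso_W p) =
    ereal (\<Sum>y\<in>{1..int l}. (p y - p (- y))^2 / (p y + p (- y)))"
proof (rule antisym)
  show "eta_KL l (biso_W p) \<le> ereal (\<Sum>y\<in>{1..int l}. (p y - p (- y))^2 / (p y + p (- y)))"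
    using biso_KL_ratio_le[OF assms] by (rule eta_KL_le)
next
  let ?U = perturbed_uniform
  have "\<forall>\<^sub>F e in at 0. KL (out_alph l) (out_dist (biso_W p) (?U e)) (out_dist (biso_W p) (?U 0))
      / KL in_alph (?U e) (?U 0) \<le> eta_KL l (biso_W p)"
    using biso_KL_ratio_perturbed_uniform(1)[OF assms]
    by eventually_elim (rule KL_ratio_le_eta_KL; simp add: is_dist_perturbed_uniform)
  with biso_KL_ratio_perturbed_uniform(2)[OF assms]
  show "ereal (\<Sum>y\<in>{1..int l}. (p y - p (- y))^2 / (p y + p (- y))) \<le> eta_KL l (biso_W p)"
    by (rule tendsto_upperbound) simp
qed

end
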